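(* For any two UEC-representatives $\mathcal{U},\mathcal{U}'$ on vertex set $[n]$ there is a finite sequence of UEC-representatives $\mathcal{U}=\mathcal{U}_0,\mathcal{U}_1,\dots,\mathcal{U}_r=\mathcal{U}'$ such that, for each $t$, some monomial representation of $\mathcal{U}_{t+1}$ is obtained from some monomial representation of $\mathcal{U}_t$ by a single within-fiber, out-of-fiber-add, out-of-fiber-delete, merge, or split move.
   Context: For a DAG $\mathcal{D}$, a trek is a path with no repeated vertices and no collider; the unconditional dependence graph $\mathcal{U}^\mathcal{D}$ has an edge between distinct $v,w$ iff there is a trek between them. A UEC-representative on $[n]$ is an undirected graph equal to $\mathcal{U}^\mathcal{D}$ for some DAG $\mathcal{D}$ on $[n]$. A monomial $x_{i_1|A_1}\cdots x_{i_k|A_k}$ (distinct $i_1,\dots,i_k\in[n]$, $A_j\subseteq[n]$, with $i_l\notin A_j$ for all $l,j$, and $\bigcup_j(\{i_j\}\cup A_j)=[n]$) determines the graph on $[n]$ in which distinct $v,w$ are adjacent iff both lie in some $\{i_j\}\cup A_j$; it is a monomial representation of a graph $\mathcal{U}$ if it determines $\mathcal{U}$ (for a UEC-representative, taking $\{i_1,\dots,i_k\}$ any maximum independent set and $A_j=\mathrm{ne}_\mathcal{U}(i_j)$ gives one). Moves on a monomial representation: within-fiber: replace a factor $x_{i|A}x_{j|B}$ by $x_{i|A\cup C}x_{j|B\setminus C}$ where $C\subseteq B\setminus A$; out-of-fiber-add: replace $x_{i_1|A_1}x_{i_2|A_2}$ by $x_{i_1|A_1}x_{i_2|A_2\cup\{c\}}$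 with $c\in A_1\setminus A_2$; out-of-fiber-delete: replace $x_{i_1|A_1}x_{i_2|A_2}$ by $x_{i_1|A_1}x_{i_2|A_2\setminus\{c\}}$ with $c\in A_1\cap A_2$; merge: replace $x_{i_1|A}x_{i_2|A}$ by $x_{i_1|A\cup\{i_2\}}$; split: if $c\in A_1$ and $c\notin A_j$ for all $j\neq1$, replace $x_{i_1|A_1}$ by $x_{i_1|A_1\setminus\{c\}}x_{c|A_1\setminus\{c\}}$. *)

theory Defs
  imports Main
begin

text \<open>Vertex set [n] = {1..n}. A DAG on [n] is a set of directed edges (a,b), meaning a -> b,
  between vertices of [n], that is acyclic.\<close>

definition is_DAG :: "nat \<Rightarrow> (nat \<times> nat) set \<Rightarrow> bool" where
  "is_DAG n D \<longleftrightarrow> D \<subseteq> {1..n} \<times> {1..n} \<and> acyclic D"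

definition is_trek :: "(nat \<times> nat) set \<Rightarrow> nat list \<Rightarrow> bool" where
  "is_trek D p \<longleftrightarrow> p \<noteq> [] \<and> distinct p
     \<and> (\<forall>i. Suc i < length p \<longrightarrow> (p ! i, p ! Suc i) \<in> D \<or> (p ! Suc i, p ! i) \<in> D)
     \<and> (\<forall>i. 0 < i \<and> Suc i < length p \<longrightarrow>
            \<not> ((p ! (i - 1), p ! i) \<in> D \<and> (p ! Suc i, p ! i) \<in> D))"

text \<open>Undirected graphs on [n] are represented by their edge sets (sets of 2-element subsets).\<close>

definition udg :: "nat \<Rightarrow> (nat \<times> nat) set \<Rightarrow> nat set set" where
  "udg n D = {{v, w} | v w. v \<in> {1..n} \<and> w \<in> {1..n} \<and> v \<noteq> w
                \<and> (\<exists>p. is_trek D p \<and> hd p = v \<and> last p = w)}"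

definition UEC_rep :: "nat \<Rightarrow> nat set set \<Rightarrow> bool" where
  "UEC_rep n U \<longleftrightarrow> (\<exists>D. is_DAG n D \<and> U = udg n D)"

text \<open>A monomial x_{i_1|A_1}...x_{i_k|A_k} is represented by the finite set of its factors
  (i_j, A_j); the heads i_j are pairwise distinct.\<close>

definition valid_monomial :: "nat \<Rightarrow> (nat \<times> nat set) set \<Rightarrow> bool" where
  "valid_monomial n M \<longleftrightarrow> finite M
     \<and> (\<forall>(i, A)\<in>M. \<forall>(j, B)\<in>M. i = j \<longrightarrow> A = B)
     \<and> (\<forall>(i, A)\<in>M. \<forall>(j, B)\<in>M. i \<notin> B)
     \<and> (\<Union>(i, A)\<in>M. insert i A) = {1..n}"

definition monomial_graph :: "(nat \<times> nat set) set \<Rightarrow> nat set set" where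
  "monomial_graph M = {{v, w} | v w. v \<noteq> w \<and> (\<exists>(i, A)\<in>M. v \<in> insert i A \<and> w \<in> insert i A)}"

definition monomial_rep :: "nat \<Rightarrow> (nat \<times> nat set) set \<Rightarrow> nat set set \<Rightarrow> bool" where
  "monomial_rep n M U \<longleftrightarrow> valid_monomial n M \<and> monomial_graph M = U"

definition within_fiber :: "(nat \<times> nat set) set \<Rightarrow> (nat \<times> nat set) set \<Rightarrow> bool" where
  "within_fiber M M' \<longleftrightarrow> (\<exists>i A j B C. (i, A) \<in> M \<and> (j, B) \<in> M \<and> i \<noteq> j \<and> C \<subseteq> B - A
     \<and> M' = (M - {(i, A), (j, B)}) \<union> {(i, A \<union> C), (j, B - C)})"

definition out_fiber_add :: "(nat \<times> nat set) set \<Rightarrow> (nat \<times> nat set) set \<Rightarrow> bool" where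
  "out_fiber_add M M' \<longleftrightarrow> (\<exists>i1 A1 i2 A2 c. (i1, A1) \<in> M \<and> (i2, A2) \<in> M \<and> i1 \<noteq> i2
     \<and> c \<in> A1 - A2 \<and> M' = (M - {(i2, A2)}) \<union> {(i2, insert c A2)})"

definition out_fiber_delete :: "(nat \<times> nat set) set \<Rightarrow> (nat \<times> nat set) set \<Rightarrow> bool" where
  "out_fiber_delete M M' \<longleftrightarrow> (\<exists>i1 A1 i2 A2 c. (i1, A1) \<in> M \<and> (i2, A2) \<in> M \<and> i1 \<noteq> i2
     \<and> c \<in> A1 \<inter> A2 \<and> M' = (M - {(i2, A2)}) \<union> {(i2, A2 - {c})})"

definition merge_move :: "(nat \<times> nat set) set \<Rightarrow> (nat \<times> nat set) set \<Rightarrow> bool" where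
  "merge_move M M' \<longleftrightarrow> (\<exists>i1 i2 A. (i1, A) \<in> M \<and> (i2, A) \<in> M \<and> i1 \<noteq> i2
     \<and> M' = (M - {(i1, A), (i2, A)}) \<union> {(i1, insert i2 A)})"

definition split_move :: "(nat \<times> nat set) set \<Rightarrow> (nat \<times> nat set) set \<Rightarrow> bool" where
  "split_move M M' \<longleftrightarrow> (\<exists>i1 A1 c. (i1, A1) \<in> M \<and> c \<in> A1
     \<and> (\<forall>(j, B)\<in>M. j \<noteq> i1 \<longrightarrow> c \<notin> B)
     \<and> M' = (M - {(i1, A1)}) \<union> {(i1, A1 - {c}), (c, A1 - {c})})"

definition single_move :: "(nat \<times> nat set) set \<Rightarrow> (nat \<times> nat set) set \<Rightarrow> bool" where
  "single_move M M' \<longleftrightarrow> within_fiber M M' \<or> out_fiber_add M M' \<or> out_fiber_delete M M'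
     \<or> merge_move M M' \<or> split_move M M'"

end

theory Submission
  imports Defs
begin

(* In a DAG two vertices are joined by a trek iff they have a common ancestor: a collider-free walk
   climbs backwards to a single top vertex and then descends, and conversely two directed walks from
   a common ancestor, shortened until they meet only at their start, glue to a trek.  Hence a
   UEC-representative is the graph of the monomial whose factors are the sources, each with its set
   of proper descendants; conversely the graph of any monomial is the UEC-representative of the DAG
   pointing from every head into its fiber.

   Every monomial is connected to one with empty fibers, whose graph is empty: an element c of the
   fiber of i is removed by an out-of-fiber-delete if it also lies in another fiber, and split off as
   a new head otherwise.  These moves are undone by an out-of-fiber-add and a merge, and they
   decrease the number of non-heads or keep it and decrease the total fiber size.  So any two
   UEC-representatives are connected through the empty graph. *)

lemma rtranclp_imp_successively:
  assumes "R\<^sup>*\<^sup>* x y"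
  shows "\<exists>xs. xs \<noteq> [] \<and> hd xs = x \<and> last xs = y \<and> successively R xs"
  using assms
proof (induction rule: converse_rtranclp_induct)
  case base
  show ?case by (intro exI[of _ "[y]"]) simp
next
  case (step x z)
  then obtain xs where "xs \<noteq> []" "hd xs = z" "last xs = y" "successively R xs" by blast
  with step.hyps(1) show ?case by (intro exI[of _ "x # xs"]) (simp add: successively_Cons)
qed

lemma successively_invariant:
  assumes "successively R xs" and "xs \<noteq> []" and "P (hd xs)" and "\<And>a b. R a b \<Longrightarrow> P a \<Longrightarrow> P b"
  shows "\<forall>x\<in>set xs. P x"
  using assms(1-3)
proof (induction xs rule: induct_list012)
  case (3 x y zs)
  from "3.prems" have "P y"
    by (intro assms(4)[of x y]) simp_all
  with 3 show ?case
    by simp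
qed simp_all

section \<open>Treks and common ancestors\<close>

abbreviation directed_walk :: "('a \<times> 'a) set \<Rightarrow> 'a list \<Rightarrow> bool" where
  "directed_walk D \<equiv> successively (\<lambda>x y. (x, y) \<in> D)"

lemma acyclic_directed_walk_distinct:
  assumes "acyclic D" and "directed_walk D xs"
  shows "distinct xs"
proof -
  have "successively (\<lambda>x y. (x, y) \<in> D\<^sup>+) xs"
    using assms(2) by (rule successively_mono) auto
  then have "sorted_wrt (\<lambda>x y. (x, y) \<in> D\<^sup>+) xs"
    by (subst (asm) successively_iff_sorted_wrt_strong) (auto intro: trancl_trans)
  then show ?thesis
    using assms(1) by (induction xs) (auto simp: acyclic_def)
qed

lemma rtrancl_imp_directed_walk:
  assumes "(t, v) \<in> D\<^sup>*"
  obtains P where "directed_walk D (t # P)" and "last (t # P) = v"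
proof -
  obtain xs where "xs \<noteq> []" "hd xs = t" "last xs = v" "directed_walk D xs"
    using rtranclp_imp_successively[of "\<lambda>x y. (x, y) \<in> D" t v] assms
    by (auto simp: rtranclp_rtrancl_eq)
  then show thesis
    using that[of "tl xs"] by (cases xs) auto
qed

abbreviation walk :: "('a \<times> 'a) set \<Rightarrow> 'a list \<Rightarrow> bool" where
  "walk D \<equiv> successively (\<lambda>x y. (x, y) \<in> D \<or> (y, x) \<in> D)"

fun collider_free :: "('a \<times> 'a) set \<Rightarrow> 'a list \<Rightarrow> bool" where
  "collider_free D (x # y # z # q) \<longleftrightarrow> \<not> ((x, y) \<in> D \<and> (z, y) \<in> D) \<and> collider_free D (y # z # q)"
| "collider_free D _ \<longleftrightarrow> True"

lemma collider_free_conv_nth: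
  "collider_free D p \<longleftrightarrow> (\<forall>j. Suc (Suc j) < length p \<longrightarrow>
     \<not> ((p ! j, p ! Suc j) \<in> D \<and> (p ! Suc (Suc j), p ! Suc j) \<in> D))"
proof (induction D p rule: collider_free.induct)
  case (1 D x y z q)
  have split: "(\<forall>j. P j) \<longleftrightarrow> P 0 \<and> (\<forall>k. P (Suc k))" for P :: "nat \<Rightarrow> bool"
    by (metis not0_implies_Suc)
  show ?case
    unfolding collider_free.simps 1 by (subst split) simp
qed auto

lemma is_trek_iff:
  "is_trek D p \<longleftrightarrow> p \<noteq> [] \<and> distinct p \<and> walk D p \<and> collider_free D p"
proof -
  have "(\<forall>i. 0 < i \<and> Suc i < length p \<longrightarrow> \<not> ((p ! (i - 1), p ! i) \<in> D \<and> (p ! Suc i, p ! i) \<in> D))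
    \<longleftrightarrow> collider_free D p"
    unfolding collider_free_conv_nth by (metis Suc_pred diff_Suc_1 zero_less_Suc)
  then show ?thesis
    unfolding is_trek_def successively_conv_nth by blast
qed

lemma collider_free_walk_shape:
  assumes "walk D (x # q)" and "collider_free D (x # q)"
  shows "(x, last (x # q)) \<in> D\<^sup>* \<or>
    q \<noteq> [] \<and> (hd q, x) \<in> D \<and> (\<exists>t. (t, x) \<in> D\<^sup>* \<and> (t, last q) \<in> D\<^sup>*)"
  using assms
proof (induction q arbitrary: x)
  case Nil
  then show ?case by simp
next
  case (Cons y q)
  have IH: "(y, last (y # q)) \<in> D\<^sup>* \<or>
      q \<noteq> [] \<and> (hd q, y) \<in> D \<and> (\<exists>t. (t, y) \<in> D\<^sup>* \<and> (t, last q) \<in> D\<^sup>*)"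
    using Cons.prems by (intro Cons.IH) (auto elim: collider_free.elims)
  show ?case
  proof (cases "(y, x) \<in> D")
    case True
    from IH obtain t where "(t, y) \<in> D\<^sup>*" "(t, last (y # q)) \<in> D\<^sup>*"
      by auto
    with True show ?thesis
      by (auto intro: rtrancl_into_rtrancl)
  next
    case False
    then have "(x, y) \<in> D"
      using Cons.prems(1) by simp
    moreover have "\<not> (q \<noteq> [] \<and> (hd q, y) \<in> D)"
      using Cons.prems(2) \<open>(x, y) \<in> D\<close> by (cases q) auto
    ultimately show ?thesis
      using IH by (auto intro: converse_rtrancl_into_rtrancl)
  qed
qed

lemma trek_common_ancestor:
  assumes "is_trek D p"
  shows "\<exists>t. (t, hd p) \<in> D\<^sup>* \<and> (t, last p) \<in> D\<^sup>*"
proof -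
  obtain x q where p: "p = x # q"
    using assms by (cases p) (auto simp: is_trek_iff)
  then show ?thesis
    using collider_free_walk_shape[of D x q] assms by (auto simp: is_trek_iff)
qed

lemma acyclic_edge_not_reversed:
  assumes "acyclic D" and "(x, y) \<in> D"
  shows "(y, x) \<notin> D"
  using assms unfolding acyclic_def by (meson r_into_trancl trancl_into_trancl)

lemma collider_free_Cons_parent:
  assumes "collider_free D p" and "(hd p, x) \<in> D" and "(x, hd p) \<notin> D"
  shows "collider_free D (x # p)"
  using assms by (cases "(D, p)" rule: collider_free.cases) auto

lemma directed_walk_collider_free:
  assumes "acyclic D" and "directed_walk D p"
  shows "collider_free D p"
  using assms by (induction D p rule: collider_free.induct) (auto dest: acyclic_edge_not_reversed)

lemma joined_directed_walks_collider_free: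
  assumes "acyclic D"
    and "directed_walk D (c # P)" and "directed_walk D (c # Q)"
  shows "walk D (rev P @ c # Q) \<and> collider_free D (rev P @ c # Q)"
  using assms(2)
proof (induction P rule: rev_induct)
  case Nil
  show ?case
    using assms(3) directed_walk_collider_free[OF assms(1)]
    by (auto elim: successively_mono)
next
  case (snoc x P)
  have walk: "directed_walk D (c # P)" and edge: "(last (c # P), x) \<in> D"
    using snoc.prems by (simp_all add: successively_append_iff flip: append_Cons)
  have "hd (rev P @ c # Q) = last (c # P)"
    by (cases P rule: rev_cases) auto
  then show ?case
    using snoc.IH[OF walk] edge acyclic_edge_not_reversed[OF assms(1) edge]
    by (auto simp: successively_Cons intro: collider_free_Cons_parent)
qed

lemma directed_walks_trek:
  assumes "acyclic D"
    and "directed_walk D (c # P)" and "directed_walk D (c # Q)"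
  shows "\<exists>p. is_trek D p \<and> hd p = last (c # P) \<and> last p = last (c # Q)"
  using assms(2,3)
proof (induction "length P + length Q" arbitrary: c P Q rule: less_induct)
  case less
  show ?case
  proof (cases "set P \<inter> set (c # Q) = {}")
    case True
    have "distinct (c # P)" and "distinct (c # Q)"
      using less.prems acyclic_directed_walk_distinct[OF assms(1)] by blast+
    with True have "is_trek D (rev P @ c # Q)"
      using joined_directed_walks_collider_free[OF assms(1) less.prems] by (auto simp: is_trek_iff)
    moreover have "hd (rev P @ c # Q) = last (c # P)"
      by (cases P rule: rev_cases) auto
    ultimately show ?thesis by auto
  next
    case False
    then obtain x where "x \<in> set P" "x \<in> set (c # Q)" by blast
    then obtain P1 P2 Q1 Q2 where P: "P = P1 @ x # P2" and Q: "c # Q = Q1 @ x # Q2"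
      by (meson split_list)
    have "length Q2 \<le> length Q"
      using arg_cong[OF Q, of length] by simp
    then have "length P2 + length Q2 < length P + length Q"
      using P by simp
    moreover have "directed_walk D (x # P2)"
      using less.prems(1) unfolding P by (simp add: successively_append_iff flip: append_Cons)
    moreover have "directed_walk D (x # Q2)"
      using less.prems(2) unfolding Q by (simp add: successively_append_iff)
    ultimately have "\<exists>p. is_trek D p \<and> hd p = last (x # P2) \<and> last p = last (x # Q2)"
      by (rule less.hyps)
    moreover have "last (x # P2) = last (c # P)" and "last (x # Q2) = last (c # Q)"
      unfolding P Q by simp_all
    ultimately show ?thesis by simp
  qed
qed

lemma common_ancestor_trek:
  assumes "acyclic D" and "(t, v) \<in> D\<^sup>*" and "(t, w) \<in> D\<^sup>*"
  shows "\<exists>p. is_trek D p \<and> hd p = v \<and> last p = w"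
proof -
  obtain P Q where "directed_walk D (t # P)" "last (t # P) = v"
    and "directed_walk D (t # Q)" "last (t # Q) = w"
    using rtrancl_imp_directed_walk assms(2,3) by metis
  then show ?thesis
    using directed_walks_trek[OF assms(1)] by metis
qed

lemma udg_eq_common_ancestors:
  assumes "is_DAG n D"
  shows "udg n D = {{v, w} | v w. v \<in> {1..n} \<and> w \<in> {1..n} \<and> v \<noteq> w
                \<and> (\<exists>t. (t, v) \<in> D\<^sup>* \<and> (t, w) \<in> D\<^sup>*)}"
proof -
  have "(\<exists>p. is_trek D p \<and> hd p = v \<and> last p = w) \<longleftrightarrow> (\<exists>t. (t, v) \<in> D\<^sup>* \<and> (t, w) \<in> D\<^sup>*)" for v w
    using trek_common_ancestor common_ancestor_trek assms unfolding is_DAG_def by metis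
  then show ?thesis
    unfolding udg_def by simp
qed


section \<open>Monomial representations of UEC-representatives\<close>

lemma valid_monomialI:
  assumes "finite M"
    and "\<And>i A B. (i, A) \<in> M \<Longrightarrow> (i, B) \<in> M \<Longrightarrow> A = B"
    and "\<And>i A j B. (i, A) \<in> M \<Longrightarrow> (j, B) \<in> M \<Longrightarrow> i \<notin> B"
    and "(\<Union>(i, A)\<in>M. insert i A) = {1..n}"
  shows "valid_monomial n M"
  using assms unfolding valid_monomial_def by fast

lemma valid_monomial_finite:
  "valid_monomial n M \<Longrightarrow> finite M"
  unfolding valid_monomial_def by blast

lemma valid_monomial_cover:
  "valid_monomial n M \<Longrightarrow> (\<Union>(i, A)\<in>M. insert i A) = {1..n}"
  unfolding valid_monomial_def by blast

lemma valid_monomial_head_unique: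
  "valid_monomial n M \<Longrightarrow> (i, A) \<in> M \<Longrightarrow> (i, B) \<in> M \<Longrightarrow> A = B"
  unfolding valid_monomial_def by (simp add: Ball_def case_prod_beta)

lemma valid_monomial_head_notin_fiber:
  "valid_monomial n M \<Longrightarrow> (i, A) \<in> M \<Longrightarrow> (j, B) \<in> M \<Longrightarrow> i \<notin> B"
  unfolding valid_monomial_def by (simp add: Ball_def case_prod_beta) blast

lemma valid_monomial_factor_subset:
  "valid_monomial n M \<Longrightarrow> (i, A) \<in> M \<Longrightarrow> insert i A \<subseteq> {1..n}"
  unfolding valid_monomial_def by (metis (no_types, lifting) UN_upper case_prod_conv)

definition fiber_dag :: "('a \<times> 'a set) set \<Rightarrow> ('a \<times> 'a) set" where
  "fiber_dag M = {(i, a). \<exists>A. (i, A) \<in> M \<and> a \<in> A}"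

lemma fiber_dag_trancl:
  assumes "valid_monomial n M"
  shows "(fiber_dag M)\<^sup>+ = fiber_dag M"
proof -
  have "trans (fiber_dag M)"
    using valid_monomial_head_notin_fiber[OF assms] by (auto simp: trans_def fiber_dag_def)
  then show ?thesis
    by (rule trancl_id)
qed

lemma fiber_dag_rtrancl:
  assumes "valid_monomial n M"
  shows "(fiber_dag M)\<^sup>* = Id \<union> fiber_dag M"
  by (auto simp: rtrancl_trancl_reflcl fiber_dag_trancl[OF assms])

lemma fiber_dag_is_DAG:
  assumes "valid_monomial n M"
  shows "is_DAG n (fiber_dag M)"
proof -
  have "acyclic (fiber_dag M)"
    unfolding acyclic_def fiber_dag_trancl[OF assms]
    using valid_monomial_head_notin_fiber[OF assms] by (auto simp: fiber_dag_def)
  moreover have "fiber_dag M \<subseteq> {1..n} \<times> {1..n}"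
    using valid_monomial_factor_subset[OF assms] by (fastforce simp: fiber_dag_def)
  ultimately show ?thesis
    by (simp add: is_DAG_def)
qed

lemma fiber_dag_common_ancestor:
  assumes "valid_monomial n M" and "v \<noteq> w"
  shows "(\<exists>t. (t, v) \<in> (fiber_dag M)\<^sup>* \<and> (t, w) \<in> (fiber_dag M)\<^sup>*)
    \<longleftrightarrow> (\<exists>(i, A)\<in>M. v \<in> insert i A \<and> w \<in> insert i A)"
proof
  assume "\<exists>t. (t, v) \<in> (fiber_dag M)\<^sup>* \<and> (t, w) \<in> (fiber_dag M)\<^sup>*"
  then obtain t where "t = v \<or> (t, v) \<in> fiber_dag M" "t = w \<or> (t, w) \<in> fiber_dag M"
    unfolding fiber_dag_rtrancl[OF assms(1)] by blast
  then obtain A B where "(t, A) \<in> M" "(t, B) \<in> M" "v \<in> insert t A" "w \<in> insert t B"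
    using assms(2) unfolding fiber_dag_def by blast
  moreover have "A = B"
    using valid_monomial_head_unique[OF assms(1)] calculation(1,2) .
  ultimately show "\<exists>(i, A)\<in>M. v \<in> insert i A \<and> w \<in> insert i A"
    by blast
next
  assume "\<exists>(i, A)\<in>M. v \<in> insert i A \<and> w \<in> insert i A"
  then obtain i A where "(i, A) \<in> M" "v \<in> insert i A" "w \<in> insert i A"
    by blast
  then have "(i, v) \<in> (fiber_dag M)\<^sup>*" and "(i, w) \<in> (fiber_dag M)\<^sup>*"
    unfolding fiber_dag_rtrancl[OF assms(1)] fiber_dag_def by auto
  then show "\<exists>t. (t, v) \<in> (fiber_dag M)\<^sup>* \<and> (t, w) \<in> (fiber_dag M)\<^sup>*"
    by blast
qed

lemma monomial_graph_UEC_rep: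
  assumes "valid_monomial n M"
  shows "UEC_rep n (monomial_graph M)"
proof -
  have "(v \<in> {1..n} \<and> w \<in> {1..n} \<and> v \<noteq> w \<and> (\<exists>t. (t, v) \<in> (fiber_dag M)\<^sup>* \<and> (t, w) \<in> (fiber_dag M)\<^sup>*))
    \<longleftrightarrow> (v \<noteq> w \<and> (\<exists>(i, A)\<in>M. v \<in> insert i A \<and> w \<in> insert i A))" for v w
    using fiber_dag_common_ancestor[OF assms, of v w] valid_monomial_factor_subset[OF assms]
    by blast
  then have "udg n (fiber_dag M) = monomial_graph M"
    unfolding udg_eq_common_ancestors[OF fiber_dag_is_DAG[OF assms]] monomial_graph_def
    by (simp only: conj_assoc)
  then show ?thesis
    using fiber_dag_is_DAG[OF assms] unfolding UEC_rep_def by blast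
qed

lemma rtrancl_closed:
  assumes "D \<subseteq> A \<times> A" and "(s, v) \<in> D\<^sup>*" and "s \<in> A"
  shows "v \<in> A"
  using assms(2,3) by (induction rule: rtrancl_induct) (use assms(1) in blast)+

lemma rtrancl_closed_converse:
  assumes "D \<subseteq> A \<times> A" and "(t, v) \<in> D\<^sup>*" and "v \<in> A"
  shows "t \<in> A"
  using assms(2,3) by (induction rule: converse_rtrancl_induct) (use assms(1) in blast)+

lemma DAG_source_ancestor:
  assumes "is_DAG n D" and "v \<in> {1..n}"
  obtains s where "s \<in> {1..n}" and "\<forall>u. (u, s) \<notin> D" and "(s, v) \<in> D\<^sup>*"
proof -
  have D: "D \<subseteq> {1..n} \<times> {1..n}" and "acyclic D"
    using assms(1) unfolding is_DAG_def by blast+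
  then have "wf D"
    using finite_acyclic_wf finite_subset[OF D] by blast
  moreover have "v \<in> {u. (u, v) \<in> D\<^sup>*}"
    by simp
  ultimately obtain s where s: "(s, v) \<in> D\<^sup>*" and min: "\<And>u. (u, s) \<in> D \<Longrightarrow> (u, v) \<notin> D\<^sup>*"
    by (rule wfE_min) auto
  have "\<forall>u. (u, s) \<notin> D"
    using min s by (meson converse_rtrancl_into_rtrancl)
  moreover have "s \<in> {1..n}"
    using rtrancl_closed_converse[OF D s assms(2)] .
  ultimately show thesis
    using that s by blast
qed

definition source_monomial :: "nat \<Rightarrow> (nat \<times> nat) set \<Rightarrow> (nat \<times> nat set) set" where
  "source_monomial n D = (\<lambda>s. (s, {v. (s, v) \<in> D\<^sup>+})) ` {s \<in> {1..n}. \<forall>u. (u, s) \<notin> D}"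

lemma source_monomial_valid:
  assumes "is_DAG n D"
  shows "valid_monomial n (source_monomial n D)"
proof -
  have D: "D \<subseteq> {1..n} \<times> {1..n}"
    using assms unfolding is_DAG_def by blast
  have "(\<Union>(i, A)\<in>source_monomial n D. insert i A) = {1..n}"
  proof
    show "(\<Union>(i, A)\<in>source_monomial n D. insert i A) \<subseteq> {1..n}"
      using rtrancl_closed[OF D] by (auto simp: source_monomial_def dest: trancl_into_rtrancl)
    show "{1..n} \<subseteq> (\<Union>(i, A)\<in>source_monomial n D. insert i A)"
    proof
      fix v assume "v \<in> {1..n}"
      then obtain s where "s \<in> {1..n}" "\<forall>u. (u, s) \<notin> D" "(s, v) \<in> D\<^sup>*"
        using DAG_source_ancestor[OF assms] by blast
      then show "v \<in> (\<Union>(i, A)\<in>source_monomial n D. insert i A)"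
        unfolding source_monomial_def by (auto simp: rtrancl_eq_or_trancl)
    qed
  qed
  then show ?thesis
    unfolding valid_monomial_def by (auto simp: source_monomial_def dest: tranclD2)
qed

lemma source_monomial_graph:
  assumes "is_DAG n D"
  shows "monomial_graph (source_monomial n D) = udg n D"
proof -
  have D: "D \<subseteq> {1..n} \<times> {1..n}"
    using assms unfolding is_DAG_def by blast
  have "(\<exists>(i, A)\<in>source_monomial n D. v \<in> insert i A \<and> w \<in> insert i A)
    \<longleftrightarrow> v \<in> {1..n} \<and> w \<in> {1..n} \<and> (\<exists>t. (t, v) \<in> D\<^sup>* \<and> (t, w) \<in> D\<^sup>*)" for v w
  proof
    assume "\<exists>(i, A)\<in>source_monomial n D. v \<in> insert i A \<and> w \<in> insert i A"
    then obtain s where "s \<in> {1..n}" "(s, v) \<in> D\<^sup>*" "(s, w) \<in> D\<^sup>*"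
      unfolding source_monomial_def by (auto simp: rtrancl_eq_or_trancl)
    then show "v \<in> {1..n} \<and> w \<in> {1..n} \<and> (\<exists>t. (t, v) \<in> D\<^sup>* \<and> (t, w) \<in> D\<^sup>*)"
      using rtrancl_closed[OF D] by blast
  next
    assume "v \<in> {1..n} \<and> w \<in> {1..n} \<and> (\<exists>t. (t, v) \<in> D\<^sup>* \<and> (t, w) \<in> D\<^sup>*)"
    then obtain t where t: "(t, v) \<in> D\<^sup>*" "(t, w) \<in> D\<^sup>*" "t \<in> {1..n}"
      using rtrancl_closed_converse[OF D] by blast
    then obtain s where "s \<in> {1..n}" "\<forall>u. (u, s) \<notin> D" "(s, t) \<in> D\<^sup>*"
      using DAG_source_ancestor[OF assms] by blast
    moreover from t this(3) have "(s, v) \<in> D\<^sup>*" "(s, w) \<in> D\<^sup>*"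
      by (meson rtrancl_trans)+
    ultimately have "(s, {x. (s, x) \<in> D\<^sup>+}) \<in> source_monomial n D"
      and "v \<in> insert s {x. (s, x) \<in> D\<^sup>+} \<and> w \<in> insert s {x. (s, x) \<in> D\<^sup>+}"
      unfolding source_monomial_def by (auto simp: rtrancl_eq_or_trancl)
    then show "\<exists>(i, A)\<in>source_monomial n D. v \<in> insert i A \<and> w \<in> insert i A"
      by (auto intro!: bexI[of _ "(s, {x. (s, x) \<in> D\<^sup>+})"])
  qed
  then show ?thesis
    unfolding udg_eq_common_ancestors[OF assms] monomial_graph_def by auto
qed

lemma UEC_rep_imp_monomial_rep:
  assumes "UEC_rep n U"
  obtains M where "monomial_rep n M U"
  using assms source_monomial_valid source_monomial_graph
  unfolding UEC_rep_def monomial_rep_def by metis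


section \<open>Connecting monomials by moves\<close>

definition fiber_size :: "('a \<times> 'a set) set \<Rightarrow> nat" where
  "fiber_size M = (\<Sum>(i, A)\<in>M. card A)"

lemma valid_monomial_card_le:
  assumes "valid_monomial n M"
  shows "card M \<le> n"
proof -
  have "inj_on fst M"
    using valid_monomial_head_unique[OF assms] unfolding inj_on_def by (metis prod.collapse)
  moreover have "fst ` M \<subseteq> {1..n}"
    using valid_monomial_factor_subset[OF assms] by force
  ultimately show ?thesis
    by (metis card_atLeastAtMost card_image card_mono diff_Suc_1 finite_atLeastAtMost)
qed

lemma delete_shared_fiber_element:
  assumes val: "valid_monomial n M" and iA: "(i, A) \<in> M" and jB: "(j, B) \<in> M" and "j \<noteq> i"
    and "c \<in> A" and "c \<in> B"
  defines "M' \<equiv> (M - {(i, A)}) \<union> {(i, A - {c})}"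
  shows "valid_monomial n M'" and "out_fiber_delete M M'" and "out_fiber_add M' M"
    and "card M' = card M" and "fiber_size M' < fiber_size M"
proof -
  note unique = valid_monomial_head_unique[OF val]
  have fin: "finite M"
    using val by (rule valid_monomial_finite)
  have new: "(i, A - {c}) \<notin> M"
    using unique[OF iA] \<open>c \<in> A\<close> by blast
  show "valid_monomial n M'"
  proof (rule valid_monomialI)
    show "finite M'"
      using fin unfolding M'_def by simp
    show "K = L" if "(k, K) \<in> M'" "(k, L) \<in> M'" for k K L
      using that unique iA unfolding M'_def by blast
    show "k \<notin> L" if "(k, K) \<in> M'" "(l, L) \<in> M'" for k K l L
      using that valid_monomial_head_notin_fiber[OF val] iA unfolding M'_def by blast
    have "(\<Union>(k, K)\<in>M'. insert k K) = (\<Union>(k, K)\<in>M. insert k K)"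
      using assms(2-6) unfolding M'_def by blast
    then show "(\<Union>(k, K)\<in>M'. insert k K) = {1..n}"
      using valid_monomial_cover[OF val] by simp
  qed
  show "out_fiber_delete M M'"
    unfolding out_fiber_delete_def M'_def using assms(2-6) by blast
  have "M = (M' - {(i, A - {c})}) \<union> {(i, insert c (A - {c}))}"
    using iA \<open>c \<in> A\<close> new unfolding M'_def by (auto simp: insert_absorb)
  then show "out_fiber_add M' M"
    unfolding out_fiber_add_def M'_def using assms(2-6) by blast
  show "card M' = card M"
    using fin new iA unfolding M'_def by (simp add: card_Suc_Diff1 del: card_Diff_insert)
  have "fiber_size M = card A + fiber_size (M - {(i, A)})"
    unfolding fiber_size_def by (simp add: sum.remove[OF fin iA])
  moreover have "fiber_size M' = card (A - {c}) + fiber_size (M - {(i, A)})"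
    unfolding fiber_size_def M'_def using fin new by simp
  moreover have "card (A - {c}) < card A"
    using valid_monomial_factor_subset[OF val iA] \<open>c \<in> A\<close>
    by (meson card_Diff1_less finite_atLeastAtMost finite_insert finite_subset)
  ultimately show "fiber_size M' < fiber_size M"
    by linarith
qed

lemma split_private_fiber_element:
  assumes val: "valid_monomial n M" and iA: "(i, A) \<in> M" and "c \<in> A"
    and only_i: "\<forall>(j, B)\<in>M. j \<noteq> i \<longrightarrow> c \<notin> B"
  defines "M' \<equiv> (M - {(i, A)}) \<union> {(i, A - {c}), (c, A - {c})}"
  shows "valid_monomial n M'" and "split_move M M'" and "merge_move M' M"
    and "card M < card M'"
proof -
  note unique = valid_monomial_head_unique[OF val]
  note notin_fiber = valid_monomial_head_notin_fiber[OF val]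
  have fin: "finite M"
    using val by (rule valid_monomial_finite)
  have ic: "i \<noteq> c"
    using notin_fiber[OF iA iA] \<open>c \<in> A\<close> by blast
  have new_i: "(i, A - {c}) \<notin> M"
    using unique[OF iA] \<open>c \<in> A\<close> by blast
  have new_c: "(c, K) \<notin> M" for K
    using notin_fiber[OF _ iA] \<open>c \<in> A\<close> by blast
  show "valid_monomial n M'"
  proof (rule valid_monomialI)
    show "finite M'"
      using fin unfolding M'_def by simp
    show "K = L" if "(k, K) \<in> M'" "(k, L) \<in> M'" for k K L
      using that unique iA new_c ic unfolding M'_def by blast
    show "k \<notin> L" if "(k, K) \<in> M'" "(l, L) \<in> M'" for k K l L
    proof -
      have "k = c \<or> (\<exists>K'. (k, K') \<in> M)"
        using that(1) iA unfolding M'_def by blast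
      moreover have "L = A - {c} \<or> l \<noteq> i \<and> (l, L) \<in> M"
        using that(2) unique[OF iA] unfolding M'_def by blast
      ultimately show ?thesis
        using notin_fiber[OF _ iA] notin_fiber only_i by blast
    qed
    have "(\<Union>(k, K)\<in>M'. insert k K) = (\<Union>(k, K)\<in>M. insert k K)"
      using iA \<open>c \<in> A\<close> unfolding M'_def by blast
    then show "(\<Union>(k, K)\<in>M'. insert k K) = {1..n}"
      using valid_monomial_cover[OF val] by simp
  qed
  show "split_move M M'"
    unfolding split_move_def M'_def using iA \<open>c \<in> A\<close> only_i by blast
  have "M = (M' - {(i, A - {c}), (c, A - {c})}) \<union> {(i, insert c (A - {c}))}"
    using iA \<open>c \<in> A\<close> new_i new_c unfolding M'_def by (auto simp: insert_absorb)
  then show "merge_move M' M"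
    unfolding merge_move_def M'_def using ic by blast
  show "card M < card M'"
    using fin new_i new_c iA ic unfolding M'_def
    by (simp add: card_Suc_Diff1 del: card_Diff_insert)
qed

definition move_step :: "nat \<Rightarrow> nat set set \<Rightarrow> nat set set \<Rightarrow> bool" where
  "move_step n U V \<longleftrightarrow> (\<exists>M M'. monomial_rep n M U \<and> monomial_rep n M' V \<and> single_move M M')"

lemma monomial_graph_no_fibers:
  "\<forall>(i, A)\<in>M. A = {} \<Longrightarrow> monomial_graph M = {}"
  unfolding monomial_graph_def by auto

lemma move_step_connects_empty_graph:
  assumes "valid_monomial n M"
  shows "(move_step n)\<^sup>*\<^sup>* (monomial_graph M) {} \<and> (move_step n)\<^sup>*\<^sup>* {} (monomial_graph M)"
  using assms
proof (induction M rule: wf_induct_rule[OF wf_measures[of "[\<lambda>M. n - card M, fiber_size]"]])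
  case (1 M)
  have reversible: "?case"
    if "valid_monomial n M'" "single_move M M'" "single_move M' M"
      and "n - card M' < n - card M \<or> n - card M' = n - card M \<and> fiber_size M' < fiber_size M"
    for M'
  proof -
    have "(move_step n)\<^sup>*\<^sup>* (monomial_graph M') {} \<and> (move_step n)\<^sup>*\<^sup>* {} (monomial_graph M')"
      using that by (intro "1.IH") (simp_all add: in_measures)
    moreover have "move_step n (monomial_graph M) (monomial_graph M')"
      and "move_step n (monomial_graph M') (monomial_graph M)"
      using that "1.prems" unfolding move_step_def monomial_rep_def by blast+
    ultimately show ?thesis
      by (meson converse_rtranclp_into_rtranclp rtranclp.rtrancl_into_rtrancl)
  qed
  show ?case
  proof (cases "\<forall>(i, A)\<in>M. A = {}")
    case True
    then show ?thesis
      by (simp add: monomial_graph_no_fibers)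
  next
    case False
    then obtain i A c where iA: "(i, A) \<in> M" and "c \<in> A"
      by blast
    show ?thesis
    proof (cases "\<exists>(j, B)\<in>M. j \<noteq> i \<and> c \<in> B")
      case True
      then obtain j B where "(j, B) \<in> M" "j \<noteq> i" "c \<in> B"
        by blast
      note delete = delete_shared_fiber_element[OF "1.prems" iA this(1,2) \<open>c \<in> A\<close> this(3)]
      show ?thesis
        using delete by (intro reversible) (auto simp: single_move_def)
    next
      case False
      then have "\<forall>(j, B)\<in>M. j \<noteq> i \<longrightarrow> c \<notin> B"
        by blast
      note split = split_private_fiber_element[OF "1.prems" iA \<open>c \<in> A\<close> this]
      have "n - card ((M - {(i, A)}) \<union> {(i, A - {c}), (c, A - {c})}) < n - card M"
        using split(1,4) valid_monomial_card_le by (meson diff_less_mono2 order.strict_trans2)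
      then show ?thesis
        using split by (intro reversible) (auto simp: single_move_def)
    qed
  qed
qed

lemma move_step_UEC_rep:
  "move_step n U V \<Longrightarrow> UEC_rep n V"
  unfolding move_step_def monomial_rep_def using monomial_graph_UEC_rep by blast

theorem theorem4p6:
  fixes n :: nat and U U' :: "nat set set"
  assumes "UEC_rep n U" and "UEC_rep n U'"
  shows "\<exists>Us :: nat set set list. Us \<noteq> [] \<and> hd Us = U \<and> last Us = U'
           \<and> (\<forall>V\<in>set Us. UEC_rep n V)
           \<and> (\<forall>t. Suc t < length Us \<longrightarrow>
                (\<exists>M M'. monomial_rep n M (Us ! t) \<and> monomial_rep n M' (Us ! Suc t)
                        \<and> single_move M M'))"
proof -
  obtain M M' where "monomial_rep n M U" and "monomial_rep n M' U'"
    using UEC_rep_imp_monomial_rep assms by metis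
  then have "(move_step n)\<^sup>*\<^sup>* U U'"
    using move_step_connects_empty_graph unfolding monomial_rep_def by (meson rtranclp_trans)
  then obtain Us where Us: "Us \<noteq> []" "hd Us = U" "last Us = U'" "successively (move_step n) Us"
    using rtranclp_imp_successively by metis
  moreover have "\<forall>V\<in>set Us. UEC_rep n V"
    using successively_invariant[OF Us(4,1)] Us(2) assms(1) move_step_UEC_rep by metis
  ultimately show ?thesis
    unfolding successively_conv_nth move_step_def by blast
qed

end
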